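(* Let $h \ge 2$ and $k \ge 3$ be integers. For every integer $i_0 \in [0,h-2]$, the sumset size set $\mathcal{R}_{\mathbf{Z}}(h,k)$ contains the arithmetic progression \[ \left\{ (i_0+1)b + (h-i_0)(h(k-2)+1) - \frac{(h+i_0+1)(h-i_0)(k-2)}{2} \;:\; b \in \big[(h-i_0)(k-2) - (k-3),\ (h-i_0)(k-2)\big] \right\}. \] In particular, $\mathcal{R}_{\mathbf{Z}}(h,k)$ contains the integer interval \[ \left[ \frac{h^2(k-2)}{2} + \frac{hk}{2} - k + 3,\ \frac{h^2(k-2)}{2} + \frac{hk}{2} \right]. \]
   Context: For a positive integer $h$ and a finite set $A$ of integers, $hA$ denotes the set of all sums $a_1+\cdots+a_h$ with $a_1,\ldots,a_h \in A$ (not necessarily distinct). The sumset size set is $\mathcal{R}_{\mathbf{Z}}(h,k) = \{ |hA| : A \subseteq \mathbf{Z},\ |A| = k\}$. For real $u,v$, the integer interval $[u,v]$ is $\{n \in \mathbf{Z} : u \le n \le v\}$. *)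

theory Defs
  imports Main
begin

definition hsumset :: "nat \<Rightarrow> int set \<Rightarrow> int set" where
  "hsumset h A = {(\<Sum>i<h. a i) | a. \<forall>i<h. a i \<in> A}"

definition sumset_sizes :: "nat \<Rightarrow> nat \<Rightarrow> nat set" where
  "sumset_sizes h k = {card (hsumset h A) | A. finite A \<and> card A = k}"

end

theory Submission
  imports Defs
begin

text \<open>Put L = k - 2 and A = {0..L} \<union> {x}. The sums in hA that use x exactly j times fill the
interval [jx, jx + (h - j)L]. If (h - i - 1)L < x \<le> (h - i)L, consecutive intervals with j \<le> i + 1
overlap or abut, so they merge into [0, (i + 1)x + (h - i - 1)L], whereas every later interval starts
beyond the end of all earlier ones. Adding up lengths makes |hA| an affine function of x with slope
i + 1, which gives the progression; the interval of the second claim is the progression for i = 0.\<close>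

lemma hsumset_0 [simp]: "hsumset 0 A = {0}"
  by (simp add: hsumset_def)

lemma hsumset_Suc: "hsumset (Suc h) A = (\<Union>a\<in>A. (+) a ` hsumset h A)"
proof (intro equalityI subsetI)
  fix y assume "y \<in> hsumset (Suc h) A"
  then obtain f where y: "y = (\<Sum>i<Suc h. f i)" and f: "\<forall>i<Suc h. f i \<in> A"
    unfolding hsumset_def by blast
  have "(\<Sum>i<h. f i) \<in> hsumset h A"
    using f unfolding hsumset_def by auto
  moreover have "y = f h + (\<Sum>i<h. f i)"
    using y by simp
  ultimately show "y \<in> (\<Union>a\<in>A. (+) a ` hsumset h A)"
    using f by blast
next
  fix y assume "y \<in> (\<Union>a\<in>A. (+) a ` hsumset h A)"
  then obtain a f where y: "y = a + (\<Sum>i<h. f i)" and a: "a \<in> A" and f: "\<forall>i<h. f i \<in> A"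
    unfolding hsumset_def by blast
  have "(\<Sum>i<h. (f(h := a)) i) = (\<Sum>i<h. f i)"
    by (intro sum.cong) auto
  then have "y = (\<Sum>i<Suc h. (f(h := a)) i)"
    using y by simp
  moreover have "\<forall>i<Suc h. (f(h := a)) i \<in> A"
    using a f by (simp add: less_Suc_eq)
  ultimately show "y \<in> hsumset (Suc h) A"
    unfolding hsumset_def by blast
qed

lemma UN_plus_atLeastAtMost:
  fixes L u v :: int
  assumes "0 \<le> L" "u \<le> v"
  shows "(\<Union>a\<in>{0..L}. (+) a ` {u..v}) = {u..v + L}"
proof (intro equalityI subsetI)
  fix y assume "y \<in> {u..v + L}"
  then have "max 0 (y - v) \<in> {0..L}" "y - max 0 (y - v) \<in> {u..v}"
    using assms by auto
  then show "y \<in> (\<Union>a\<in>{0..L}. (+) a ` {u..v})"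
    by (intro UN_I[of "max 0 (y - v)"] image_eqI[of _ _ "y - max 0 (y - v)"]) auto
qed auto

definition block :: "nat \<Rightarrow> int \<Rightarrow> int \<Rightarrow> nat \<Rightarrow> int set" where
  "block h L x j = {int j * x .. int j * x + int (h - j) * L}"

lemma hsumset_insert_atLeastAtMost:
  fixes L x :: int
  assumes "0 \<le> L"
  shows "hsumset h (insert x {0..L}) = (\<Union>j\<le>h. block h L x j)"
proof (induction h)
  case 0
  then show ?case by (simp add: block_def)
next
  case (Suc h)
  have shift: "(+) x ` block h L x j = block (Suc h) L x (Suc j)" for j
    by (simp add: block_def algebra_simps)
  have widen: "(\<Union>a\<in>{0..L}. (+) a ` block h L x j) = block (Suc h) L x j" if "j \<le> h" for j
  proof -
    have "(\<Union>a\<in>{0..L}. (+) a ` block h L x j) = {int j * x .. int j * x + int (h - j) * L + L}"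
      unfolding block_def using assms by (intro UN_plus_atLeastAtMost) auto
    moreover have "int (Suc h - j) * L = int (h - j) * L + L"
      using that by (simp add: Suc_diff_le algebra_simps)
    ultimately show ?thesis
      by (simp add: block_def)
  qed
  have "hsumset (Suc h) (insert x {0..L})
      = (\<Union>j\<le>h. (+) x ` block h L x j) \<union> (\<Union>j\<le>h. \<Union>a\<in>{0..L}. (+) a ` block h L x j)"
    unfolding hsumset_Suc Suc.IH image_UN UN_insert by (simp only: SUP_commute[where A="{0..L}"])
  also have "\<dots> = (\<Union>j\<le>h. block (Suc h) L x (Suc j)) \<union> (\<Union>j\<le>h. block (Suc h) L x j)"
    by (simp add: shift widen)
  also have "\<dots> = (\<Union>j\<le>Suc h. block (Suc h) L x j)"
  proof -
    have "(\<Union>j\<le>Suc h. block (Suc h) L x j) = block (Suc h) L x 0 \<union> (\<Union>j\<le>h. block (Suc h) L x (Suc j))"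
      by (simp add: atMost_Suc_eq_insert_0)
    moreover have "(\<Union>j\<le>h. block (Suc h) L x j) \<subseteq> (\<Union>j\<le>Suc h. block (Suc h) L x j)"
      by (intro UN_mono) auto
    ultimately show ?thesis
      by auto
  qed
  finally show ?case .
qed

lemma card_block: "0 \<le> L \<Longrightarrow> int (card (block h L x j)) = int (h - j) * L + 1"
  by (simp add: block_def)

lemma block_le:
  fixes L x :: int
  assumes "0 \<le> L" "L \<le> x" "j \<le> t" "y \<in> block h L x j"
  shows "y \<le> int t * x + int (h - t) * L"
proof -
  have "int (h - j) * L \<le> (int (h - t) + (int t - int j)) * L"
    using assms(1,3) by (intro mult_right_mono) auto
  moreover have "(int t - int j) * L \<le> (int t - int j) * x"
    using assms(2,3) by (intro mult_left_mono) auto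
  moreover have "y \<le> int j * x + int (h - j) * L"
    using assms(4) by (simp add: block_def)
  ultimately show ?thesis
    by (simp add: algebra_simps)
qed

lemma UN_block_atMost_merged:
  fixes L x :: int
  assumes "0 \<le> L" "L \<le> x" "x \<le> int (Suc h - t) * L + 1"
  shows "(\<Union>j\<le>t. block h L x j) = {0 .. int t * x + int (h - t) * L}"
  using assms(3)
proof (induction t)
  case 0
  then show ?case by (simp add: block_def)
next
  case (Suc t)
  have "int (Suc h - Suc t) * L \<le> int (Suc h - t) * L"
    using assms(1) by (intro mult_right_mono) auto
  then have "(\<Union>j\<le>t. block h L x j) = {0 .. int t * x + int (h - t) * L}"
    using Suc by simp
  moreover have "int t * x + int (h - t) * L \<le> int (Suc t) * x + int (h - Suc t) * L"
    using assms(1,2) by (cases "t < h") (auto simp: of_nat_diff algebra_simps)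
  moreover have "int (Suc t) * x \<le> int t * x + int (h - t) * L + 1"
    using Suc.prems by (simp add: algebra_simps)
  moreover have "0 \<le> int (Suc t) * x"
    using assms(1,2) by simp
  ultimately show ?case
    by (auto simp: atMost_Suc block_def)
qed

lemma card_UN_block_atMost_Suc:
  fixes L x :: int
  assumes "0 \<le> L" "L \<le> x" "int (h - t) * L < x"
  shows "card (\<Union>j\<le>Suc t. block h L x j) = card (block h L x (Suc t)) + card (\<Union>j\<le>t. block h L x j)"
proof -
  have "y < int (Suc t) * x" if "y \<in> (\<Union>j\<le>t. block h L x j)" for y
    using that assms block_le[OF assms(1,2)] by (fastforce simp: algebra_simps)
  then have "block h L x (Suc t) \<inter> (\<Union>j\<le>t. block h L x j) = {}"
    by (force simp: block_def)
  then show ?thesis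
    by (simp add: atMost_Suc card_Un_disjoint block_def)
qed

lemma card_UN_block_atMost:
  fixes L x :: int
  assumes "0 \<le> L" "L \<le> x" "int (h - Suc i) * L < x" "x \<le> int (h - i) * L + 1"
    and "Suc i \<le> t" "t \<le> h"
  shows "2 * int (card (\<Union>j\<le>t. block h L x j)) =
    2 * (int (Suc i) * x + int (h - Suc i) * L + 1 + (int t - int i - 1))
      + L * (int t - int i - 1) * (2 * int h - int t - int i - 2)"
  using assms(5,6)
proof (induction t rule: dec_induct)
  case base
  have "(\<Union>j\<le>Suc i. block h L x j) = {0 .. int (Suc i) * x + int (h - Suc i) * L}"
    using assms(1,2,4) by (intro UN_block_atMost_merged) auto
  then show ?case
    using assms(1,2) by simp
next
  case (step t)
  have "int (h - t) * L \<le> int (h - Suc i) * L"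
    using step.hyps assms(1) by (intro mult_right_mono) auto
  then have "card (\<Union>j\<le>Suc t. block h L x j) = card (block h L x (Suc t)) + card (\<Union>j\<le>t. block h L x j)"
    using assms(1-3) by (intro card_UN_block_atMost_Suc) auto
  moreover have "int (h - Suc t) = int h - int t - 1"
    using step.prems by simp
  ultimately show ?case
    using step card_block[OF assms(1)] by (simp add: algebra_simps)
qed

lemma card_hsumset_insert_atLeastAtMost:
  fixes L x :: int
  assumes "0 \<le> L" "L \<le> x" "int (h - Suc i) * L < x" "x \<le> int (h - i) * L"
  shows "2 * int (card (hsumset h (insert x {0..L}))) =
    2 * ((int i + 1) * x + (int h - int i) * (int h * L + 1)) - (int h + int i + 1) * (int h - int i) * L"
proof -
  have "i < h"
    using assms(3,4) by (cases "i < h") auto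
  then have "int (h - Suc i) = int h - int i - 1"
    by simp
  then show ?thesis
    using card_UN_block_atMost[OF assms(1-3), of h] assms(4) \<open>i < h\<close>
    by (simp add: hsumset_insert_atLeastAtMost[OF assms(1)] algebra_simps)
qed

lemma progression_in_sumset_sizes:
  fixes h k :: nat and i0 b :: int
  assumes "k \<ge> 3" "0 \<le> i0" "i0 \<le> int h - 2"
    and "(int h - i0) * (int k - 2) - (int k - 3) \<le> b" "b \<le> (int h - i0) * (int k - 2)"
  shows "(i0 + 1) * b + (int h - i0) * (int h * (int k - 2) + 1)
           - ((int h + i0 + 1) * (int h - i0) * (int k - 2)) div 2 \<in> int ` sumset_sizes h k"
proof -
  define L where "L = int k - 2"
  define i where "i = nat i0"
  define A where "A = insert b {0..L}"
  have i0: "i0 = int i" "int (h - i) = int h - i0" "int (h - Suc i) = int h - i0 - 1"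
    using assms(2,3) by (simp_all add: i_def)
  have "L \<le> (int h - i0 - 1) * L"
    using assms(1,3) by (simp add: L_def)
  then have "L < b"
    using assms(4) by (simp add: L_def algebra_simps)
  then have "card A = k"
    using assms(1) by (simp add: A_def L_def)
  then have "card (hsumset h A) \<in> sumset_sizes h k"
    by (auto simp: sumset_sizes_def A_def)
  moreover have "2 * int (card (hsumset h A)) =
      2 * ((i0 + 1) * b + (int h - i0) * (int h * L + 1)) - (int h + i0 + 1) * (int h - i0) * L"
    unfolding A_def i0(1) using assms(1,4,5) \<open>L < b\<close>
    by (intro card_hsumset_insert_atLeastAtMost) (auto simp: i0 L_def algebra_simps)
  then have "(int h + i0 + 1) * (int h - i0) * L
      = 2 * ((i0 + 1) * b + (int h - i0) * (int h * L + 1) - int (card (hsumset h A)))"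
    by (simp add: algebra_simps)
  ultimately show ?thesis
    unfolding L_def[symmetric] by (simp add: image_iff)
qed

lemma interval_subset_sumset_sizes:
  fixes h k :: nat
  assumes "h \<ge> 2" "k \<ge> 3"
  shows "{(int h ^ 2 * (int k - 2) + int h * int k) div 2 - int k + 3 ..
          (int h ^ 2 * (int k - 2) + int h * int k) div 2} \<subseteq> int ` sumset_sizes h k"
proof
  fix y assume y: "y \<in> {(int h ^ 2 * (int k - 2) + int h * int k) div 2 - int k + 3 ..
                          (int h ^ 2 * (int k - 2) + int h * int k) div 2}"
  define L where "L = int k - 2"
  define D where "D = ((int h + 1) * int h * L) div 2"
  have "even ((int h + 1) * int h)"
    by simp
  then have D: "2 * D = (int h + 1) * int h * L"
    by (auto simp: D_def)
  have "int h ^ 2 * (int k - 2) + int h * int k = 2 * (D + int h)"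
    using D by (simp add: L_def power2_eq_square algebra_simps)
  then have "D + int h - L + 1 \<le> y" "y \<le> D + int h"
    using y by (simp_all add: L_def)
  then have "(int h - 0) * (int k - 2) - (int k - 3) \<le> y - int h * (int h * L + 1) + D"
    "y - int h * (int h * L + 1) + D \<le> (int h - 0) * (int k - 2)"
    using D by (simp_all add: L_def algebra_simps)
  from progression_in_sumset_sizes[OF assms(2) _ _ this] assms(1)
  show "y \<in> int ` sumset_sizes h k"
    by (simp add: D_def L_def)
qed

theorem mainTheorem10:
  fixes h k :: nat
  assumes "h \<ge> 2" and "k \<ge> 3"
  shows "(\<forall>i0::int. 0 \<le> i0 \<and> i0 \<le> int h - 2 \<longrightarrow>
            (\<forall>b::int. (int h - i0) * (int k - 2) - (int k - 3) \<le> b \<and> b \<le> (int h - i0) * (int k - 2) \<longrightarrow>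
               (i0 + 1) * b + (int h - i0) * (int h * (int k - 2) + 1)
                 - ((int h + i0 + 1) * (int h - i0) * (int k - 2)) div 2
               \<in> int ` sumset_sizes h k))
       \<and> {(int h ^ 2 * (int k - 2) + int h * int k) div 2 - int k + 3 ..
          (int h ^ 2 * (int k - 2) + int h * int k) div 2} \<subseteq> int ` sumset_sizes h k"
  using progression_in_sumset_sizes[OF assms(2)] interval_subset_sumset_sizes[OF assms]
  by blast

end
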